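(* Let $n\ge2$ and consider $n$ qubits, $\mathcal H=(\mathbb C^2)^{\otimes n}$, in the drift-less setting with neighborhoods $\mathcal N_1,\dots,\mathcal N_M$ each satisfying $|\mathcal N_k|<n/2$ (i.e. no neighborhood contains $n/2$ qubits if $n$ is even, or $(n+1)/2$ qubits if $n$ is odd). Then the GHZ state $\rho_{\mathrm{GHZ}}=|\Psi_{\mathrm{GHZ}}\rangle\langle\Psi_{\mathrm{GHZ}}|$, $|\Psi_{\mathrm{GHZ}}\rangle=(|0\rangle^{\otimes n}+|1\rangle^{\otimes n})/\sqrt2$, is not QLS.
   Context: Neighborhoods are subsets of $\{1,\dots,n\}$. QL operator: $X_{\mathcal N_k}\otimes I_{\bar{\mathcal N}_k}$; QL Hamiltonian: sum of Hermitian QL operators. $\mathcal L(H,\{D_k\})(\rho)=-i[H,\rho]+\sum_k(D_k\rho D_k^\dagger-\frac12\{D_k^\dagger D_k,\rho\})$. A pure state $\rho_d=|\Psi\rangle\langle\Psi|$ is QLS if there exist a QL Hamiltonian $H_c$ and finitely many QL operators $D_k$ with $D_k|\Psi\rangle=0$ and $H_c|\Psi\rangle\in\mathbb R|\Psi\rangle$ such that $e^{\mathcal L(H_c,\{D_k\})t}(\rho_0)\to\rho_d$ for every density operator $\rho_0$. *)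

theory Defs
  imports "HOL-Analysis.Analysis"
begin

text \<open>Qubits are indexed by a finite type 'q (n = CARD('q)). The computational basis of
  (C^2)^{\<otimes> n} is indexed by 'q set: the basis vector indexed by S has qubit q in state |1>
  iff q \<in> S.\<close>

type_synonym 'q qvec = "complex ^ ('q set)"
type_synonym 'q qop = "complex ^ ('q set) ^ ('q set)"

definition smul :: "complex \<Rightarrow> 'q::finite qop \<Rightarrow> 'q qop" where
  "smul c A = (\<chi> i j. c * A $ i $ j)"

definition adj :: "'q::finite qop \<Rightarrow> 'q qop" where
  "adj A = (\<chi> i j. cnj (A $ j $ i))"

definition hermitian :: "'q::finite qop \<Rightarrow> bool" where
  "hermitian A \<longleftrightarrow> adj A = A"

definition inner_c :: "'q::finite qvec \<Rightarrow> 'q qvec \<Rightarrow> complex" where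
  "inner_c v w = (\<Sum>i\<in>UNIV. cnj (v $ i) * w $ i)"

definition psd :: "'q::finite qop \<Rightarrow> bool" where
  "psd A \<longleftrightarrow> (\<forall>v. Im (inner_c v (A *v v)) = 0 \<and> Re (inner_c v (A *v v)) \<ge> 0)"

definition trace_c :: "'q::finite qop \<Rightarrow> complex" where
  "trace_c A = (\<Sum>i\<in>UNIV. A $ i $ i)"

definition density_op :: "'q::finite qop \<Rightarrow> bool" where
  "density_op \<rho> \<longleftrightarrow> hermitian \<rho> \<and> psd \<rho> \<and> trace_c \<rho> = 1"

definition outer :: "'q::finite qvec \<Rightarrow> 'q qvec \<Rightarrow> 'q qop" where
  "outer v w = (\<chi> i j. v $ i * cnj (w $ j))"

text \<open>A is quasi-local on neighborhood N: A = X_N \<otimes> I on the complement of N.\<close>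
definition QL_on :: "'q::finite set \<Rightarrow> 'q qop \<Rightarrow> bool" where
  "QL_on N A \<longleftrightarrow> (\<exists>X :: 'q set \<Rightarrow> 'q set \<Rightarrow> complex.
      \<forall>S T. A $ S $ T = (if S - N = T - N then X (S \<inter> N) (T \<inter> N) else 0))"

definition QL_op :: "'q::finite set set \<Rightarrow> 'q qop \<Rightarrow> bool" where
  "QL_op Ns A \<longleftrightarrow> (\<exists>N\<in>Ns. QL_on N A)"

definition QL_hamiltonian :: "'q::finite set set \<Rightarrow> 'q qop \<Rightarrow> bool" where
  "QL_hamiltonian Ns H \<longleftrightarrow>
     (\<exists>Hs. (\<forall>h\<in>set Hs. hermitian h \<and> QL_op Ns h) \<and> H = sum_list Hs)"

definition lindblad :: "'q::finite qop \<Rightarrow> 'q qop list \<Rightarrow> 'q qop \<Rightarrow> 'q qop" where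
  "lindblad H Ds \<rho> =
     smul (-\<i>) (H ** \<rho> - \<rho> ** H)
     + sum_list (map (\<lambda>D. D ** \<rho> ** adj D
          - smul (1/2) (adj D ** D ** \<rho> + \<rho> ** (adj D ** D))) Ds)"

definition semigroup :: "('q::finite qop \<Rightarrow> 'q qop) \<Rightarrow> real \<Rightarrow> 'q qop \<Rightarrow> 'q qop" where
  "semigroup L t \<rho> = (\<Sum>k. (t ^ k / fact k) *\<^sub>R (L ^^ k) \<rho>)"

definition QLS :: "'q::finite set set \<Rightarrow> 'q qvec \<Rightarrow> bool" where
  "QLS Ns \<psi> \<longleftrightarrow>
     (\<exists>Hc Ds. QL_hamiltonian Ns Hc \<and> (\<forall>D\<in>set Ds. QL_op Ns D)
        \<and> (\<forall>D\<in>set Ds. D *v \<psi> = 0)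
        \<and> (\<exists>r::real. Hc *v \<psi> = (\<chi> i. complex_of_real r * \<psi> $ i))
        \<and> (\<forall>\<rho>0. density_op \<rho>0 \<longrightarrow>
              ((\<lambda>t. semigroup (lindblad Hc Ds) t \<rho>0) \<longlongrightarrow> outer \<psi> \<psi>) at_top))"

definition GHZ :: "'q::finite qvec" where
  "GHZ = (\<chi> S. if S = {} \<or> S = UNIV then complex_of_real (1 / sqrt 2) else 0)"

end

theory Submission
  imports Defs
begin

text \<open>Every quasi-local operator acting on fewer than n/2 qubits maps the branch
  |0...0> of the GHZ state into the span of basis states with fewer than n/2 ones, and the
  branch |1...1> into the span of the others; this property survives sums. Hence an operator
  of the QLS data having GHZ as an eigenvector has |0...0> as an eigenvector with the same
  eigenvalue. So the dissipators annihilate |0...0> and the Hamiltonian fixes it up to a real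
  phase, which makes the pure state |0...0><0...0| stationary; the dynamics started there
  cannot converge to the GHZ state.\<close>

lemma matrix_mul_zero_left [simp]: "(0 :: 'a::semiring_1 ^ 'n ^ 'm) ** A = 0"
  by (simp add: vec_eq_iff matrix_matrix_mult_def)

lemma matrix_mul_zero_right [simp]: "A ** (0 :: 'a::semiring_1 ^ 'n ^ 'm) = 0"
  by (simp add: vec_eq_iff matrix_matrix_mult_def)

lemma smul_zero [simp]: "smul c 0 = 0"
  by (simp add: smul_def vec_eq_iff)

lemma adj_adj [simp]: "adj (adj A) = A"
  by (simp add: adj_def vec_eq_iff)

lemma adj_zero: "adj 0 = 0"
  by (simp add: adj_def vec_eq_iff)

lemma adj_add: "adj (A + B) = adj A + adj B"
  by (simp add: adj_def vec_eq_iff)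

lemma adj_matrix_mult: "adj (A ** B) = adj B ** adj A"
  by (simp add: adj_def vec_eq_iff matrix_matrix_mult_def mult.commute)

lemma hermitian_sum_list: "\<forall>A\<in>set As. hermitian A \<Longrightarrow> hermitian (sum_list As)"
  by (induction As) (simp_all add: hermitian_def adj_zero adj_add)

lemma matrix_mult_outer: "A ** outer v w = outer (A *v v) w"
  by (simp add: vec_eq_iff outer_def matrix_matrix_mult_def matrix_vector_mult_def
      sum_distrib_right mult.assoc)

lemma outer_matrix_mult: "outer v w ** A = outer v (adj A *v w)"
  by (simp add: vec_eq_iff outer_def matrix_matrix_mult_def matrix_vector_mult_def adj_def
      sum_distrib_left mult_ac)

lemma outer_zero_left [simp]: "outer 0 w = 0"
  by (simp add: vec_eq_iff outer_def)

lemma outer_zero_right [simp]: "outer v 0 = 0"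
  by (simp add: vec_eq_iff outer_def)

lemma lindblad_zero: "lindblad H Ds 0 = 0"
  by (simp add: lindblad_def)

lemma lindblad_outer_eq_0:
  assumes H: "hermitian H" and eig: "H *v v = complex_of_real r *s v"
    and D: "\<forall>D\<in>set Ds. D *v v = 0"
  shows "lindblad H Ds (outer v v) = 0"
proof -
  have "H ** outer v v = outer (complex_of_real r *s v) v"
    using eig by (simp add: matrix_mult_outer)
  moreover have "outer v v ** H = outer v (complex_of_real r *s v)"
    using H eig by (simp add: outer_matrix_mult hermitian_def)
  ultimately have commutator: "H ** outer v v - outer v v ** H = 0"
    by (simp add: vec_eq_iff outer_def)
  have dissipator: "D ** outer v v ** adj D - smul (1/2) (adj D ** D ** outer v v
      + outer v v ** (adj D ** D)) = 0" if "D \<in> set Ds" for D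
  proof -
    have "D *v v = 0" using D that by blast
    then have "(adj D ** D) *v v = 0"
      by (simp flip: matrix_vector_mul_assoc)
    with \<open>D *v v = 0\<close> show ?thesis
      by (simp add: matrix_mult_outer outer_matrix_mult adj_matrix_mult)
  qed
  show ?thesis
    unfolding lindblad_def commutator by (simp add: dissipator cong: map_cong)
qed

lemma semigroup_fixed_point:
  assumes "L \<rho> = 0" "L 0 = 0"
  shows "semigroup L t \<rho> = \<rho>"
proof -
  have "(L ^^ Suc k) \<rho> = 0" for k
    by (induction k) (simp_all add: assms)
  then have "(\<lambda>k. (t ^ k / fact k) *\<^sub>R (L ^^ k) \<rho>) = (\<lambda>k. if k = 0 then \<rho> else 0)"
    by (metis (no_types) funpow_0 not0_implies_Suc power_0 fact_0 div_by_1 scaleR_one scaleR_zero_right)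
  then show ?thesis
    unfolding semigroup_def using sums_single[of 0 "\<lambda>_. \<rho>"] sums_unique by fastforce
qed

lemma outer_mult_vec: "(outer v v *v w) $ i = v $ i * inner_c v w"
  by (simp add: outer_def matrix_vector_mult_def inner_c_def sum_distrib_left mult_ac)

lemma inner_c_axis: "inner_c (axis i 1) (axis i 1) = 1"
proof -
  have "inner_c (axis i 1) (axis i 1) = (\<Sum>j\<in>UNIV. if j = i then 1 else 0)"
    unfolding inner_c_def by (rule sum.cong) (auto simp: axis_def)
  then show ?thesis by simp
qed

lemma density_op_outer:
  assumes "inner_c v v = 1"
  shows "density_op (outer v v)"
proof -
  have "inner_c w (outer v v *v w) = inner_c v w * cnj (inner_c v w)" for w
    by (simp add: outer_mult_vec inner_c_def sum_distrib_right mult_ac)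
  then have "psd (outer v v)"
    by (simp add: psd_def complex_mult_cnj)
  moreover have "trace_c (outer v v) = inner_c v v"
    by (simp add: trace_c_def inner_c_def outer_def mult.commute)
  ultimately show ?thesis
    using assms by (simp add: density_op_def hermitian_def adj_def outer_def vec_eq_iff mult.commute)
qed

definition light :: "'q::finite set \<Rightarrow> bool" where
  "light S \<longleftrightarrow> 2 * card S < CARD('q)"

definition branch_preserving :: "'q::finite qop \<Rightarrow> bool" where
  "branch_preserving A \<longleftrightarrow>
     (\<forall>S. A $ S $ {} \<noteq> 0 \<longrightarrow> light S) \<and> (\<forall>S. A $ S $ UNIV \<noteq> 0 \<longrightarrow> \<not> light S)"

lemma light_empty: "light ({} :: 'q::finite set)"
  by (simp add: light_def)

lemma not_light_UNIV: "\<not> light (UNIV :: 'q::finite set)"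
  by (simp add: light_def)

lemma QL_on_entry_eq_0:
  assumes "QL_on N A" "S - N \<noteq> T - N"
  shows "A $ S $ T = 0"
proof -
  obtain X where "\<forall>S T. A $ S $ T = (if S - N = T - N then X (S \<inter> N) (T \<inter> N) else 0)"
    using assms(1) unfolding QL_on_def by blast
  then show ?thesis using assms(2) by simp
qed

lemma QL_on_light_branch_preserving:
  fixes A :: "'q::finite qop"
  assumes QL: "QL_on N A" and N: "light N"
  shows "branch_preserving A"
  unfolding branch_preserving_def
proof (intro conjI allI impI)
  fix S :: "'q set"
  assume "A $ S $ {} \<noteq> 0"
  then have "S \<subseteq> N"
    using QL_on_entry_eq_0[OF QL, of S "{}"] by auto
  then show "light S"
    using N card_mono[of N S] by (simp add: light_def)
next
  fix S :: "'q set"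
  assume "A $ S $ UNIV \<noteq> 0"
  then have "UNIV - N \<subseteq> S"
    using QL_on_entry_eq_0[OF QL, of S UNIV] by auto
  then have "CARD('q) - card N \<le> card S"
    using card_mono[of S "UNIV - N"] by (simp add: card_Diff_subset)
  then show "\<not> light S"
    using N by (simp add: light_def)
qed

lemma QL_op_branch_preserving:
  "QL_op Ns A \<Longrightarrow> \<forall>N\<in>Ns. light N \<Longrightarrow> branch_preserving A"
  unfolding QL_op_def using QL_on_light_branch_preserving by blast

lemma branch_preserving_zero: "branch_preserving (0 :: 'q::finite qop)"
  by (simp add: branch_preserving_def)

lemma branch_preserving_add:
  "branch_preserving A \<Longrightarrow> branch_preserving B \<Longrightarrow> branch_preserving (A + B)"
  unfolding branch_preserving_def by (metis add.right_neutral vector_add_component)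

lemma branch_preserving_sum_list:
  "\<forall>A\<in>set As. branch_preserving A \<Longrightarrow> branch_preserving (sum_list As)"
  by (induction As) (simp_all add: branch_preserving_zero branch_preserving_add)

lemma matrix_vector_mult_GHZ:
  fixes A :: "'q::finite qop"
  shows "(A *v GHZ) $ S = complex_of_real (1 / sqrt 2) * (A $ S $ {} + A $ S $ UNIV)"
proof -
  let ?c = "complex_of_real (1 / sqrt 2)"
  have "(A *v GHZ) $ S = (\<Sum>T\<in>UNIV. A $ S $ T * (if T = {} \<or> T = UNIV then ?c else 0))"
    by (simp add: matrix_vector_mult_def GHZ_def)
  also have "\<dots> = (\<Sum>T\<in>{{}, UNIV}. A $ S $ T * ?c)"
    by (rule sum.mono_neutral_cong_right) auto
  also have "\<dots> = ?c * (A $ S $ {} + A $ S $ UNIV)"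
    by (simp add: algebra_simps)
  finally show ?thesis .
qed

lemma branch_preserving_GHZ_eigenvector:
  fixes A :: "'q::finite qop"
  assumes bp: "branch_preserving A" and eig: "A *v GHZ = c *s GHZ"
  shows "A *v axis {} 1 = c *s axis {} 1"
proof -
  have "A $ S $ {} = (if S = {} then c else 0)" for S
  proof -
    have "complex_of_real (1 / sqrt 2) * (A $ S $ {} + A $ S $ UNIV)
        = complex_of_real (1 / sqrt 2) * (if S = {} \<or> S = UNIV then c else 0)"
      using arg_cong[OF eig, of "\<lambda>v. v $ S"]
      unfolding matrix_vector_mult_GHZ vector_smult_component by (simp add: GHZ_def)
    then have GHZ_S: "A $ S $ {} + A $ S $ UNIV = (if S = {} \<or> S = UNIV then c else 0)"
      by simp
    show ?thesis
    proof (cases "light S")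
      case True
      then have "A $ S $ UNIV = 0" "S \<noteq> UNIV"
        using bp not_light_UNIV by (auto simp: branch_preserving_def)
      then show ?thesis using GHZ_S by simp
    next
      case False
      then show ?thesis using light_empty bp by (auto simp: branch_preserving_def)
    qed
  qed
  then show ?thesis
    by (simp add: vec_eq_iff matrix_vector_mult_def axis_def if_distrib cong: if_cong)
qed

theorem proposition5:
  fixes Ns :: "'q::finite set set"
  assumes "CARD('q) \<ge> 2"
    and "\<forall>N\<in>Ns. 2 * card N < CARD('q)"
  shows "\<not> QLS Ns (GHZ :: 'q qvec)"
proof
  assume "QLS Ns (GHZ :: 'q qvec)"
  then obtain Hc Ds r where Hc: "QL_hamiltonian Ns Hc" and D_QL: "\<forall>D\<in>set Ds. QL_op Ns D"
    and D_GHZ: "\<forall>D\<in>set Ds. D *v GHZ = 0"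
    and Hc_GHZ: "Hc *v GHZ = complex_of_real r *s GHZ"
    and converges: "\<forall>\<rho>0. density_op \<rho>0 \<longrightarrow>
          ((\<lambda>t. semigroup (lindblad Hc Ds) t \<rho>0) \<longlongrightarrow> outer GHZ GHZ) at_top"
    unfolding QLS_def vector_scalar_mult_def by blast
  obtain Hs where Hs: "\<forall>h\<in>set Hs. hermitian h \<and> QL_op Ns h" and Hc_sum: "Hc = sum_list Hs"
    using Hc unfolding QL_hamiltonian_def by blast
  have light: "\<forall>N\<in>Ns. light N"
    using assms(2) by (simp add: light_def)
  define e :: "'q qvec" where "e = axis {} 1"
  have "Hc *v e = complex_of_real r *s e"
    using Hs light Hc_GHZ Hc_sum unfolding e_def
    by (metis QL_op_branch_preserving branch_preserving_sum_list branch_preserving_GHZ_eigenvector)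
  moreover have "D *v e = 0" if "D \<in> set Ds" for D
    using branch_preserving_GHZ_eigenvector[OF QL_op_branch_preserving[OF _ light], of D 0]
      D_QL D_GHZ that unfolding e_def by simp
  moreover have "hermitian Hc"
    using Hs hermitian_sum_list Hc_sum by blast
  ultimately have "lindblad Hc Ds (outer e e) = 0"
    by (intro lindblad_outer_eq_0) blast+
  then have "(\<lambda>t. semigroup (lindblad Hc Ds) t (outer e e)) = (\<lambda>t. outer e e)"
    by (simp add: lindblad_zero semigroup_fixed_point)
  moreover have "density_op (outer e e)"
    by (rule density_op_outer) (simp add: e_def inner_c_axis)
  ultimately have "((\<lambda>t. outer e e) \<longlongrightarrow> outer GHZ GHZ) (at_top :: real filter)"
    using converges by metis
  then have "outer e e = outer GHZ GHZ"
    using tendsto_const_iff[OF trivial_limit_at_top_linorder] by blast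
  then have "outer e e $ {} $ {} = outer (GHZ :: 'q qvec) GHZ $ {} $ {}"
    by simp
  then show False
    by (simp add: e_def outer_def GHZ_def flip: of_real_mult)
qed

end
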